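(* Let $I\in\mathbb{I}_{2,n}$. Then the ss-compressed category $\mathcal{C}^{ss}_I$ is isomorphic to the path category (with no relations) of a quiver of one of the following five forms: a single vertex; $\bullet\to\bullet$; $\bullet\to\bullet\leftarrow\bullet$; $\bullet\leftarrow\bullet\to\bullet$; $\bullet\to\bullet\leftarrow\bullet\to\bullet$. In particular $\mathcal{C}^{ss}_I$ is of finite representation type (Dynkin type $A_k$ with $k\le 4$).
   Context: Fix a field $K$. $G_{2,n}$ is the equioriented commutative $2\times n$ grid: the quiver with vertex set $\{(i,j):1\le i\le 2,\ 1\le j\le n\}$ and arrows $(i,j)\to(i,j+1)$ and $(1,j)\to(2,j)$, bound by all commutativity relations. An interval of $G_{2,n}$ is a nonempty full subquiver $I$ which is connected (as an undirected graph) and convex (whenever $x,y\in I_0$ and there are paths $x\to z$, $z\to y$ in $G_{2,n}$, then $z\in I_0$); $\mathbb{I}_{2,n}$ is the set of intervals. $I^{ss}_0$ is the set of vertices of $I$ that are sources or sinks of the quiver $I$. $KG_{2,n}$ is the $K$-linear category whose objects are vertices and morphisms are $K$-linear combinations of paths modulo commutativity relations; $\mathcal{C}^{ss}_I$ is its full subcategory on $I^{ss}_0$. *)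

theory Defs
  imports Main
begin

text \<open>A quiver is given by a vertex set V and an arrow relation arr (all quivers
  occurring here have at most one arrow between two vertices, so a path is
  determined by its vertex sequence; a trivial path at x is the list [x]).\<close>

definition is_path :: "'v set \<Rightarrow> ('v \<Rightarrow> 'v \<Rightarrow> bool) \<Rightarrow> 'v \<Rightarrow> 'v \<Rightarrow> 'v list \<Rightarrow> bool" where
  "is_path V arr x y p \<longleftrightarrow> p \<noteq> [] \<and> hd p = x \<and> last p = y \<and> set p \<subseteq> V \<and>
     (\<forall>i. Suc i < length p \<longrightarrow> arr (p ! i) (p ! Suc i))"

definition paths :: "'v set \<Rightarrow> ('v \<Rightarrow> 'v \<Rightarrow> bool) \<Rightarrow> 'v \<Rightarrow> 'v \<Rightarrow> 'v list set" where
  "paths V arr x y = {p. is_path V arr x y p}"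

text \<open>K-linear combinations of paths from x to y (the free hom space of the path category).\<close>
definition lin_paths :: "'v set \<Rightarrow> ('v \<Rightarrow> 'v \<Rightarrow> bool) \<Rightarrow> 'v \<Rightarrow> 'v \<Rightarrow> ('v list \<Rightarrow> 'k::field) set" where
  "lin_paths V arr x y = {c. \<forall>p. c p \<noteq> 0 \<longrightarrow> p \<in> paths V arr x y}"

definition delta :: "'v list \<Rightarrow> ('v list \<Rightarrow> 'k::field)" where
  "delta p = (\<lambda>r. if r = p then 1 else 0)"

text \<open>Bilinear extension of path concatenation: d \<circ> c for c : x \<rightarrow> y, d : y \<rightarrow> z.\<close>
definition pcomp :: "'v set \<Rightarrow> ('v \<Rightarrow> 'v \<Rightarrow> bool) \<Rightarrow> 'v \<Rightarrow> 'v \<Rightarrow> 'v \<Rightarrow>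
    ('v list \<Rightarrow> 'k::field) \<Rightarrow> ('v list \<Rightarrow> 'k) \<Rightarrow> ('v list \<Rightarrow> 'k)" where
  "pcomp V arr x y z d c = (\<lambda>r. \<Sum>p\<in>paths V arr x y. \<Sum>q\<in>paths V arr y z.
       if p @ tl q = r then c p * d q else 0)"

text \<open>This is the
  (x,y)-component of the ideal of all commutativity relations.\<close>
inductive_set comm_rel :: "'v set \<Rightarrow> ('v \<Rightarrow> 'v \<Rightarrow> bool) \<Rightarrow> 'v \<Rightarrow> 'v \<Rightarrow> ('v list \<Rightarrow> 'k::field) set"
  for V arr x y where
  zero: "(\<lambda>r. 0) \<in> comm_rel V arr x y"
| diff: "p \<in> paths V arr x y \<Longrightarrow> q \<in> paths V arr x y \<Longrightarrow>
         (\<lambda>r. delta p r - delta q r) \<in> comm_rel V arr x y"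
| add: "f \<in> comm_rel V arr x y \<Longrightarrow> g \<in> comm_rel V arr x y \<Longrightarrow>
         (\<lambda>r. f r + g r) \<in> comm_rel V arr x y"
| smult: "f \<in> comm_rel V arr x y \<Longrightarrow> (\<lambda>r. a * f r) \<in> comm_rel V arr x y"

text \<open>Source: the full subcategory on the object set S of the K-linear category
  of the quiver (VG, arrG) bound by all commutativity relations; its hom space
  Hom(x,y) is the quotient lin_paths x y / comm_rel x y, composition induced by pcomp.
  Target: the path category (no relations) of the quiver (VQ, arrQ).
  An isomorphism is a bijection F0 on objects together with, for all x y in S,
  a K-linear map Phi x y on representatives that vanishes on comm_rel x y and
  induces a linear bijection of the quotient onto Hom(F0 x, F0 y), and which is
  compatible with identities and composition.\<close>

definition lin_cat_iso ::
  "'a set \<Rightarrow> ('a \<Rightarrow> 'a \<Rightarrow> bool) \<Rightarrow> 'a set \<Rightarrow> 'b set \<Rightarrow> ('b \<Rightarrow> 'b \<Rightarrow> bool) \<Rightarrow>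
   ('a \<Rightarrow> 'b) \<Rightarrow> ('a \<Rightarrow> 'a \<Rightarrow> ('a list \<Rightarrow> 'k::field) \<Rightarrow> ('b list \<Rightarrow> 'k)) \<Rightarrow> bool" where
  "lin_cat_iso VG arrG S VQ arrQ F0 Phi \<longleftrightarrow>
     bij_betw F0 S VQ \<and>
     (\<forall>x\<in>S. \<forall>y\<in>S.
        (\<forall>f\<in>lin_paths VG arrG x y. Phi x y f \<in> lin_paths VQ arrQ (F0 x) (F0 y)) \<and>
        (\<forall>f\<in>lin_paths VG arrG x y. \<forall>g\<in>lin_paths VG arrG x y.
            Phi x y (\<lambda>r. f r + g r) = (\<lambda>r. Phi x y f r + Phi x y g r)) \<and>
        (\<forall>f\<in>lin_paths VG arrG x y. \<forall>a.
            Phi x y (\<lambda>r. a * f r) = (\<lambda>r. a * Phi x y f r)) \<and>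
        (\<forall>f\<in>comm_rel VG arrG x y. Phi x y f = (\<lambda>r. 0)) \<and>
        (\<forall>f\<in>lin_paths VG arrG x y. Phi x y f = (\<lambda>r. 0) \<longrightarrow> f \<in> comm_rel VG arrG x y) \<and>
        (\<forall>h\<in>lin_paths VQ arrQ (F0 x) (F0 y). \<exists>f\<in>lin_paths VG arrG x y. Phi x y f = h)) \<and>
     (\<forall>x\<in>S. Phi x x (delta [x]) = delta [F0 x]) \<and>
     (\<forall>x\<in>S. \<forall>y\<in>S. \<forall>z\<in>S. \<forall>f\<in>lin_paths VG arrG x y. \<forall>g\<in>lin_paths VG arrG y z.
        Phi x z (pcomp VG arrG x y z g f) =
        pcomp VQ arrQ (F0 x) (F0 y) (F0 z) (Phi y z g) (Phi x y f))"

definition grid_V :: "nat \<Rightarrow> (nat \<times> nat) set" where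
  "grid_V n = {(i, j). 1 \<le> i \<and> i \<le> 2 \<and> 1 \<le> j \<and> j \<le> n}"

definition grid_arr :: "nat \<Rightarrow> nat \<times> nat \<Rightarrow> nat \<times> nat \<Rightarrow> bool" where
  "grid_arr n u v \<longleftrightarrow> u \<in> grid_V n \<and> v \<in> grid_V n \<and>
     ((fst v = fst u \<and> snd v = snd u + 1) \<or> (fst u = 1 \<and> fst v = 2 \<and> snd v = snd u))"

definition grid_intervals :: "nat \<Rightarrow> (nat \<times> nat) set set" where
  "grid_intervals n = {I. I \<noteq> {} \<and> I \<subseteq> grid_V n \<and>
     (\<forall>x\<in>I. \<forall>y\<in>I. (\<lambda>a b. a \<in> I \<and> b \<in> I \<and> (grid_arr n a b \<or> grid_arr n b a))\<^sup>*\<^sup>* x y) \<and>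
     (\<forall>x\<in>I. \<forall>y\<in>I. \<forall>z. (grid_arr n)\<^sup>*\<^sup>* x z \<longrightarrow> (grid_arr n)\<^sup>*\<^sup>* z y \<longrightarrow> z \<in> I)}"

definition ss_vertices :: "nat \<Rightarrow> (nat \<times> nat) set \<Rightarrow> (nat \<times> nat) set" where
  "ss_vertices n I = {x \<in> I. (\<not> (\<exists>u\<in>I. grid_arr n u x)) \<or> (\<not> (\<exists>w\<in>I. grid_arr n x w))}"

definition five_quivers :: "(nat \<times> (nat \<Rightarrow> nat \<Rightarrow> bool)) set" where
  "five_quivers =
     {(1, \<lambda>a b. False),
      (2, \<lambda>a b. a = 0 \<and> b = 1),
      (3, \<lambda>a b. (a = 0 \<and> b = 1) \<or> (a = 2 \<and> b = 1)),
      (3, \<lambda>a b. (a = 1 \<and> b = 0) \<or> (a = 1 \<and> b = 2)),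
      (4, \<lambda>a b. (a = 0 \<and> b = 1) \<or> (a = 2 \<and> b = 1) \<or> (a = 2 \<and> b = 3))}"

end

theory Submission
  imports Defs "HOL-Library.Product_Order"
begin

text \<open>An interval of the commutative grid is a segment of one row, or two overlapping row
  segments \<open>{1} \<times> [a1,b1] \<union> {2} \<times> [a2,b2]\<close> with \<open>a2 \<le> a1 \<le> b2 \<le> b1\<close>. Its sources and sinks
  are the at most four segment ends, and among them the grid order (in which there is a path
  \<open>x \<rightarrow> y\<close> iff \<open>x \<le> y\<close> componentwise) is equality or an arrow of one of the five quivers, none
  of which has two composable arrows. Modulo commutativity relations all parallel paths
  coincide, so a morphism is determined by the sum of its coefficients; hence every hom space
  is \<open>K\<close> or \<open>0\<close> exactly as in the path category of such a quiver, and the coefficient sum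
  is the required isomorphism.\<close>

section \<open>Paths\<close>

lemma is_path_iff_successively:
  "is_path V arr x y p \<longleftrightarrow> p \<noteq> [] \<and> hd p = x \<and> last p = y \<and> set p \<subseteq> V \<and> successively arr p"
  by (simp add: is_path_def successively_conv_nth)

lemma trivial_path_in_paths: "x \<in> V \<Longrightarrow> [x] \<in> paths V arr x x"
  by (simp add: paths_def is_path_iff_successively)

lemma path_append_in_paths:
  assumes "p \<in> paths V arr x y" and "q \<in> paths V arr y z"
  shows "p @ tl q \<in> paths V arr x z"
proof -
  obtain qs where q: "q = y # qs" "set q \<subseteq> V" "last q = z" "successively arr q"
    using assms(2) by (cases q) (auto simp: paths_def is_path_iff_successively)
  with assms(1) show ?thesis
    by (cases qs) (auto simp: paths_def is_path_iff_successively successively_append_iff)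
qed

lemma successively_rtranclp_hd_last:
  "p \<noteq> [] \<Longrightarrow> successively arr p \<Longrightarrow> arr\<^sup>*\<^sup>* (hd p) (last p)"
  by (induction arr p rule: successively.induct) (auto intro: converse_rtranclp_into_rtranclp)

lemma paths_nonempty_iff_rtranclp:
  assumes arr_V: "\<And>a b. arr a b \<Longrightarrow> a \<in> V \<and> b \<in> V" and "x \<in> V"
  shows "paths V arr x y \<noteq> {} \<longleftrightarrow> arr\<^sup>*\<^sup>* x y"
proof
  assume "paths V arr x y \<noteq> {}"
  then obtain p where "p \<noteq> []" "hd p = x" "last p = y" "successively arr p"
    by (auto simp: paths_def is_path_iff_successively)
  then show "arr\<^sup>*\<^sup>* x y" using successively_rtranclp_hd_last by blast
next
  assume reach: "arr\<^sup>*\<^sup>* x y"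
  have "y \<in> V" using reach
    by (cases rule: rtranclp.cases) (use \<open>x \<in> V\<close> arr_V in blast)+
  from reach have "\<exists>p. p \<in> paths V arr x y"
  proof (induction rule: converse_rtranclp_induct)
    case base
    show ?case using trivial_path_in_paths[OF \<open>y \<in> V\<close>] ..
  next
    case (step w v)
    then obtain p where "p \<in> paths V arr v y" by blast
    with step(1) arr_V show ?case
      by (intro exI[of _ "w # p"]) (auto simp: paths_def is_path_iff_successively successively_Cons)
  qed
  then show "paths V arr x y \<noteq> {}" by blast
qed

lemma finite_paths_graded:
  assumes "finite V" and rk: "\<And>a b. arr a b \<Longrightarrow> rk b = Suc (rk a)"
  shows "finite (paths V arr x y)"
proof -
  have "length p \<le> Suc (Max (rk ` V))" if "p \<in> paths V arr x y" for p
  proof -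
    from that have p: "p \<noteq> []" "set p \<subseteq> V" "successively arr p"
      by (auto simp: paths_def is_path_iff_successively)
    have rk_nth: "rk (p ! i) = rk (p ! 0) + i" if "i < length p" for i
      using that
    proof (induction i)
      case (Suc i)
      then show ?case using rk[OF successively_nth[OF p(3) Suc.prems]] by simp
    qed simp
    have last: "length p - 1 < length p" using p(1) by simp
    have "length p - 1 \<le> rk (p ! (length p - 1))" using rk_nth[OF last] by simp
    also have "\<dots> \<le> Max (rk ` V)"
      using assms(1) p(2) nth_mem[OF last] by (intro Max_ge) auto
    finally show ?thesis by simp
  qed
  then have "paths V arr x y \<subseteq> {p. set p \<subseteq> V \<and> length p \<le> Suc (Max (rk ` V))}"
    by (auto simp: paths_def is_path_iff_successively)
  then show ?thesis using finite_lists_length_le[OF assms(1)] by (rule finite_subset)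
qed

lemma paths_without_composable_arrows:
  assumes "\<And>a. \<not> arr a a" and "\<And>a b c. arr a b \<Longrightarrow> \<not> arr b c"
    and "\<And>a b. arr a b \<Longrightarrow> a \<in> V \<and> b \<in> V"
  shows "paths V arr a b = (if a = b \<and> a \<in> V then {[a]} else if arr a b then {[a, b]} else {})"
proof -
  have "p \<in> paths V arr a b \<longleftrightarrow> (a = b \<and> a \<in> V \<and> p = [a]) \<or> (arr a b \<and> p = [a, b])" for p
    using assms
    by (cases p rule: remdups_adj.cases; cases "tl (tl p)")
       (auto simp: paths_def is_path_iff_successively)
  then show ?thesis using assms(1) by auto
qed

section \<open>Hom spaces modulo commutativity\<close>

lemma mult_delta: "a * delta p r = (if r = p then a else 0)"
  by (simp add: delta_def)

definition coeff_sum ::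
    "'v set \<Rightarrow> ('v \<Rightarrow> 'v \<Rightarrow> bool) \<Rightarrow> 'v \<Rightarrow> 'v \<Rightarrow> ('v list \<Rightarrow> 'k::field) \<Rightarrow> 'k" where
  "coeff_sum V arr x y f = (\<Sum>p\<in>paths V arr x y. f p)"

lemma coeff_sum_add: "coeff_sum V arr x y (\<lambda>r. f r + g r) = coeff_sum V arr x y f + coeff_sum V arr x y g"
  by (simp add: coeff_sum_def sum.distrib)

lemma coeff_sum_smult: "coeff_sum V arr x y (\<lambda>r. a * f r) = a * coeff_sum V arr x y f"
  by (simp add: coeff_sum_def sum_distrib_left)

lemma coeff_sum_comm_rel:
  assumes "finite (paths V arr x y)" and "f \<in> comm_rel V arr x y"
  shows "coeff_sum V arr x y f = 0"
  using assms(2)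
proof induction
  case (diff p q)
  then show ?case using assms(1) by (simp add: coeff_sum_def sum_subtractf delta_def)
qed (simp_all add: coeff_sum_def sum.distrib sum_distrib_left[symmetric])

lemma comm_rel_sum:
  assumes "finite A" and "\<And>a. a \<in> A \<Longrightarrow> g a \<in> comm_rel V arr x y"
  shows "(\<lambda>r. \<Sum>a\<in>A. g a r) \<in> comm_rel V arr x y"
  using assms by (induction A rule: finite_induct) (simp_all add: comm_rel.zero comm_rel.add)

lemma comm_rel_of_coeff_sum_eq_0:
  assumes fin: "finite (paths V arr x y)" and f: "f \<in> lin_paths V arr x y"
    and sum: "coeff_sum V arr x y f = 0"
  shows "f \<in> comm_rel V arr x y"
proof (cases "paths V arr x y = {}")
  case True
  then have "f = (\<lambda>r. 0)" using f by (auto simp: lin_paths_def)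
  then show ?thesis by (simp add: comm_rel.zero)
next
  case False
  then obtain p0 where p0: "p0 \<in> paths V arr x y" by blast
  have "f r = (\<Sum>p\<in>paths V arr x y. f p * (delta p r - delta p0 r))" for r
  proof -
    have "(\<Sum>p\<in>paths V arr x y. f p * (delta p r - delta p0 r))
        = (\<Sum>p\<in>paths V arr x y. f p * delta p r) - coeff_sum V arr x y f * delta p0 r"
      by (simp add: coeff_sum_def right_diff_distrib sum_subtractf sum_distrib_right)
    also have "(\<Sum>p\<in>paths V arr x y. f p * delta p r) = (if r \<in> paths V arr x y then f r else 0)"
      using fin by (simp add: mult_delta)
    also have "\<dots> = f r"
      using f by (auto simp: lin_paths_def)
    finally show ?thesis using sum by simp
  qed
  then have "f = (\<lambda>r. \<Sum>p\<in>paths V arr x y. f p * (delta p r - delta p0 r))" ..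
  also have "\<dots> \<in> comm_rel V arr x y"
    using comm_rel.smult[OF comm_rel.diff[OF _ p0]] by (rule comm_rel_sum[OF fin])
  finally show ?thesis .
qed

lemma pcomp_zero:
  "pcomp V arr x y z d (\<lambda>r. 0) = (\<lambda>r. 0)" "pcomp V arr x y z (\<lambda>r. 0) c = (\<lambda>r. 0)"
  by (simp_all add: pcomp_def cong: if_cong)

lemma coeff_sum_delta:
  assumes "finite (paths V arr x y)" and "p \<in> paths V arr x y"
  shows "coeff_sum V arr x y (delta p) = 1"
  using assms by (simp add: coeff_sum_def delta_def)

lemma coeff_sum_pcomp:
  assumes "\<And>u v. finite (paths V arr u v)"
  shows "coeff_sum V arr x z (pcomp V arr x y z g f) = coeff_sum V arr x y f * coeff_sum V arr y z g"
proof -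
  let ?P = "paths V arr"
  have "coeff_sum V arr x z (pcomp V arr x y z g f)
      = (\<Sum>p\<in>?P x y. \<Sum>q\<in>?P y z. \<Sum>r\<in>?P x z. if p @ tl q = r then f p * g q else 0)"
    unfolding coeff_sum_def pcomp_def by (subst sum.swap, subst sum.swap) simp
  also have "\<dots> = (\<Sum>p\<in>?P x y. \<Sum>q\<in>?P y z. f p * g q)"
    using assms by (intro sum.cong refl) (simp add: sum.delta path_append_in_paths)
  also have "\<dots> = coeff_sum V arr x y f * coeff_sum V arr y z g"
    by (simp add: coeff_sum_def sum_product)
  finally show ?thesis .
qed

lemma pcomp_delta:
  assumes "finite (paths V arr x y)" "finite (paths V arr y z)"
    and "p \<in> paths V arr x y" "q \<in> paths V arr y z"
  shows "pcomp V arr x y z (\<lambda>r. b * delta q r) (\<lambda>r. a * delta p r) = (\<lambda>r. a * b * delta (p @ tl q) r)"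
proof -
  have "(if p' @ tl q' = r then a * delta p p' * (b * delta q q') else 0)
      = (if q' = q then if p' = p then a * b * delta (p @ tl q) r else 0 else 0)" for p' q' r
    by (simp add: delta_def)
  then show ?thesis using assms by (simp add: pcomp_def fun_eq_iff)
qed

definition short_path :: "'b \<Rightarrow> 'b \<Rightarrow> 'b list" where
  "short_path a b = (if a = b then [a] else [a, b])"

locale reachability_quiver =
  fixes VG :: "'a set" and arrG :: "'a \<Rightarrow> 'a \<Rightarrow> bool" and S :: "'a set"
    and VQ :: "'b set" and arrQ :: "'b \<Rightarrow> 'b \<Rightarrow> bool" and F0 :: "'a \<Rightarrow> 'b"
  assumes finite_paths: "finite (paths VG arrG x y)"
    and S_subset: "S \<subseteq> VG"
    and bij: "bij_betw F0 S VQ"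
    and arrQ_irrefl: "\<not> arrQ a a"
    and arrQ_not_composable: "arrQ a b \<Longrightarrow> \<not> arrQ b c"
    and arrQ_in_VQ: "arrQ a b \<Longrightarrow> a \<in> VQ \<and> b \<in> VQ"
    and paths_nonempty_iff: "x \<in> S \<Longrightarrow> y \<in> S \<Longrightarrow>
       paths VG arrG x y \<noteq> {} \<longleftrightarrow> x = y \<or> arrQ (F0 x) (F0 y)"
begin

definition Phi :: "'a \<Rightarrow> 'a \<Rightarrow> ('a list \<Rightarrow> 'k::field) \<Rightarrow> 'b list \<Rightarrow> 'k" where
  "Phi x y f = (\<lambda>r. coeff_sum VG arrG x y f * delta (short_path (F0 x) (F0 y)) r)"

lemma paths_VQ:
  assumes "x \<in> S" "y \<in> S"
  shows "paths VQ arrQ (F0 x) (F0 y) =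
    (if paths VG arrG x y = {} then {} else {short_path (F0 x) (F0 y)})"
proof -
  have "F0 x = F0 y \<longleftrightarrow> x = y" "F0 x \<in> VQ"
    using assms bij by (auto simp: bij_betw_def inj_on_def)
  then show ?thesis
    using paths_without_composable_arrows[of arrQ, OF arrQ_irrefl arrQ_not_composable arrQ_in_VQ]
      paths_nonempty_iff[OF assms]
    by (auto simp: short_path_def)
qed

lemma Phi_surj:
  assumes xy: "x \<in> S" "y \<in> S" and h: "h \<in> lin_paths VQ arrQ (F0 x) (F0 y)"
  shows "\<exists>f\<in>lin_paths VG arrG x y. Phi x y f = h"
proof (cases "paths VG arrG x y = {}")
  case True
  then show ?thesis using h paths_VQ[OF xy]
    by (intro bexI[of _ "\<lambda>r. 0"]) (auto simp: Phi_def lin_paths_def coeff_sum_def)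
next
  case False
  let ?q = "short_path (F0 x) (F0 y)"
  obtain p0 where p0: "p0 \<in> paths VG arrG x y" using False by blast
  have "Phi x y (\<lambda>r. h ?q * delta p0 r) = (\<lambda>r. h ?q * delta ?q r)"
    by (simp add: Phi_def coeff_sum_smult coeff_sum_delta[OF finite_paths p0])
  also have "\<dots> = h"
    using h paths_VQ[OF xy] False by (auto simp: lin_paths_def mult_delta fun_eq_iff)
  finally have "Phi x y (\<lambda>r. h ?q * delta p0 r) = h" .
  moreover have "(\<lambda>r. h ?q * delta p0 r) \<in> lin_paths VG arrG x y"
    using p0 by (simp add: lin_paths_def mult_delta)
  ultimately show ?thesis by blast
qed

lemma Phi_hom_iso:
  "\<forall>x\<in>S. \<forall>y\<in>S. (\<forall>f\<in>lin_paths VG arrG x y. Phi x y f \<in> lin_paths VQ arrQ (F0 x) (F0 y)) \<and>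
    (\<forall>f\<in>lin_paths VG arrG x y. \<forall>g\<in>lin_paths VG arrG x y.
        Phi x y (\<lambda>r. f r + g r) = (\<lambda>r. Phi x y f r + Phi x y g r)) \<and>
    (\<forall>f\<in>lin_paths VG arrG x y. \<forall>a. Phi x y (\<lambda>r. a * f r) = (\<lambda>r. a * Phi x y f r)) \<and>
    (\<forall>f\<in>comm_rel VG arrG x y. Phi x y f = (\<lambda>r. 0)) \<and>
    (\<forall>f\<in>lin_paths VG arrG x y. Phi x y f = (\<lambda>r. 0) \<longrightarrow> f \<in> comm_rel VG arrG x y) \<and>
    (\<forall>h\<in>lin_paths VQ arrQ (F0 x) (F0 y). \<exists>f\<in>lin_paths VG arrG x y. Phi x y f = h)"
proof (intro conjI ballI allI impI)
  fix x y assume xy: "x \<in> S" "y \<in> S"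
  show "Phi x y f \<in> lin_paths VQ arrQ (F0 x) (F0 y)" for f :: "'a list \<Rightarrow> 'k::field"
    using paths_VQ[OF xy] by (auto simp: Phi_def lin_paths_def coeff_sum_def mult_delta)
  show "Phi x y (\<lambda>r. f r + g r) = (\<lambda>r. Phi x y f r + Phi x y g r)" for f g :: "'a list \<Rightarrow> 'k::field"
    by (simp add: Phi_def coeff_sum_add distrib_right)
  show "Phi x y (\<lambda>r. a * f r) = (\<lambda>r. a * Phi x y f r)" for a and f :: "'a list \<Rightarrow> 'k::field"
    by (simp add: Phi_def coeff_sum_smult mult.assoc)
  show "Phi x y f = (\<lambda>r. 0)" if "f \<in> comm_rel VG arrG x y" for f :: "'a list \<Rightarrow> 'k::field"
    using coeff_sum_comm_rel[OF finite_paths that] by (simp add: Phi_def)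
  show "f \<in> comm_rel VG arrG x y"
    if "f \<in> lin_paths VG arrG x y" "Phi x y f = (\<lambda>r. 0)" for f :: "'a list \<Rightarrow> 'k::field"
  proof -
    have "coeff_sum VG arrG x y f = 0"
      using fun_cong[OF that(2), of "short_path (F0 x) (F0 y)"] by (simp add: Phi_def delta_def)
    then show ?thesis by (rule comm_rel_of_coeff_sum_eq_0[OF finite_paths that(1)])
  qed
  show "\<exists>f\<in>lin_paths VG arrG x y. Phi x y f = h"
    if "h \<in> lin_paths VQ arrQ (F0 x) (F0 y)" for h :: "'b list \<Rightarrow> 'k::field"
    using Phi_surj[OF xy that] .
qed

lemma Phi_id:
  assumes "x \<in> S"
  shows "Phi x x (delta [x]) = delta [F0 x]"
  using coeff_sum_delta[OF finite_paths trivial_path_in_paths] assms S_subset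
  by (auto simp: Phi_def short_path_def fun_eq_iff)

lemma Phi_comp:
  assumes "x \<in> S" "y \<in> S" "z \<in> S"
  shows "Phi x z (pcomp VG arrG x y z g f) =
    pcomp VQ arrQ (F0 x) (F0 y) (F0 z) (Phi y z g) (Phi x y f)"
proof (cases "paths VG arrG x y = {} \<or> paths VG arrG y z = {}")
  case True
  then have "coeff_sum VG arrG x y f = 0 \<or> coeff_sum VG arrG y z g = 0"
    by (auto simp: coeff_sum_def)
  then have "Phi x z (pcomp VG arrG x y z g f) = (\<lambda>r. 0)"
    and "Phi x y f = (\<lambda>r. 0) \<or> Phi y z g = (\<lambda>r. 0)"
    by (auto simp: Phi_def coeff_sum_pcomp[OF finite_paths])
  moreover from this(2) have "pcomp VQ arrQ (F0 x) (F0 y) (F0 z) (Phi y z g) (Phi x y f) = (\<lambda>r. 0)"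
    by (elim disjE) (simp_all add: pcomp_zero)
  ultimately show ?thesis by simp
next
  case False
  let ?q = "\<lambda>u v. short_path (F0 u) (F0 v)"
  have "?q x y @ tl (?q y z) = ?q x z"
    using False paths_nonempty_iff[OF assms(1,2)] paths_nonempty_iff[OF assms(2,3)]
      arrQ_not_composable
    by (auto simp: short_path_def)
  moreover have "?q x y \<in> paths VQ arrQ (F0 x) (F0 y)" "?q y z \<in> paths VQ arrQ (F0 y) (F0 z)"
    using False paths_VQ assms by auto
  ultimately show ?thesis
    using paths_VQ assms
    by (simp add: Phi_def coeff_sum_pcomp[OF finite_paths] pcomp_delta[where V = VQ])
qed

theorem lin_cat_iso_Phi: "lin_cat_iso VG arrG S VQ arrQ F0 Phi"
  unfolding lin_cat_iso_def by (intro conjI) (simp_all add: bij Phi_hom_iso Phi_id Phi_comp)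

end

section \<open>The grid\<close>

lemma grid_arr_in_grid_V: "grid_arr n u v \<Longrightarrow> u \<in> grid_V n \<and> v \<in> grid_V n"
  by (simp add: grid_arr_def)

lemma finite_grid_V: "finite (grid_V n)"
  by (rule finite_subset[of _ "{1..2} \<times> {1..n}"]) (auto simp: grid_V_def)

lemma finite_grid_paths: "finite (paths (grid_V n) (grid_arr n) x y)"
  by (rule finite_paths_graded[OF finite_grid_V, where rk = "\<lambda>(i, j). i + j"])
     (auto simp: grid_arr_def)

lemma grid_reach_row:
  assumes "(i, j) \<in> grid_V n" "j \<le> m" "m \<le> n"
  shows "(grid_arr n)\<^sup>*\<^sup>* (i, j) (i, m)"
  using assms(2,3)
proof (induction m rule: dec_induct)
  case (step m)
  then have "grid_arr n (i, m) (i, Suc m)" using assms(1) by (auto simp: grid_arr_def grid_V_def)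
  with step show ?case by (simp add: rtranclp.rtrancl_into_rtrancl)
qed simp

lemma grid_reach_iff:
  assumes "x \<in> grid_V n"
  shows "(grid_arr n)\<^sup>*\<^sup>* x y \<longleftrightarrow> y \<in> grid_V n \<and> x \<le> y"
proof
  assume "(grid_arr n)\<^sup>*\<^sup>* x y"
  then show "y \<in> grid_V n \<and> x \<le> y"
    using assms by (induction rule: rtranclp_induct) (auto simp: grid_arr_def less_eq_prod_def)
next
  assume y: "y \<in> grid_V n \<and> x \<le> y"
  obtain i j i' j' where xy: "x = (i, j)" "y = (i', j')" by fastforce
  have row: "(grid_arr n)\<^sup>*\<^sup>* (i, j) (i, j')" using assms y xy by (intro grid_reach_row) (auto simp: grid_V_def)
  show "(grid_arr n)\<^sup>*\<^sup>* x y"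
  proof (cases "i = i'")
    case False
    then have "grid_arr n (i, j') (i', j')" using assms y xy by (auto simp: grid_V_def grid_arr_def)
    with row xy show ?thesis by (simp add: rtranclp.rtrancl_into_rtrancl)
  qed (use row xy in simp)
qed

lemma grid_paths_nonempty_iff:
  assumes "x \<in> grid_V n"
  shows "paths (grid_V n) (grid_arr n) x y \<noteq> {} \<longleftrightarrow> y \<in> grid_V n \<and> x \<le> y"
  using paths_nonempty_iff_rtranclp[OF grid_arr_in_grid_V assms] grid_reach_iff[OF assms] by simp

definition enumerates_order :: "'a::ord list \<Rightarrow> (nat \<Rightarrow> nat \<Rightarrow> bool) \<Rightarrow> bool" where
  "enumerates_order xs arrQ \<longleftrightarrow> distinct xs \<and>
     (\<forall>i<length xs. \<forall>j<length xs. xs ! i \<le> xs ! j \<longleftrightarrow> i = j \<or> arrQ i j)"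

lemma lin_cat_iso_grid_of_enumeration:
  assumes xs: "set xs \<subseteq> grid_V n" "enumerates_order xs arrQ"
    and arrQ: "\<And>a. \<not> arrQ a a" "\<And>a b c. arrQ a b \<Longrightarrow> \<not> arrQ b c"
      "\<And>a b. arrQ a b \<Longrightarrow> a < length xs \<and> b < length xs"
  shows "\<exists>F0 (Phi :: _ \<Rightarrow> _ \<Rightarrow> (_ \<Rightarrow> 'k::field) \<Rightarrow> _).
    lin_cat_iso (grid_V n) (grid_arr n) (set xs) {..<length xs} arrQ F0 Phi"
proof -
  have nth_bij: "bij_betw ((!) xs) {..<length xs} (set xs)"
    using xs(2) by (intro bij_betw_nth) (auto simp: enumerates_order_def)
  define F0 where "F0 = inv_into {..<length xs} ((!) xs)"
  have F0_nth: "F0 (xs ! i) = i" if "i < length xs" for i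
    using nth_bij that by (simp add: F0_def bij_betw_def)
  have "paths (grid_V n) (grid_arr n) x y \<noteq> {} \<longleftrightarrow> x = y \<or> arrQ (F0 x) (F0 y)"
    if xy: "x \<in> set xs" "y \<in> set xs" for x y
  proof -
    obtain i j where ij: "i < length xs" "j < length xs" "x = xs ! i" "y = xs ! j"
      using xy by (auto simp: in_set_conv_nth)
    have "paths (grid_V n) (grid_arr n) x y \<noteq> {} \<longleftrightarrow> x \<le> y"
      using grid_paths_nonempty_iff xy xs(1) by blast
    also have "\<dots> \<longleftrightarrow> i = j \<or> arrQ i j"
      using xs(2) ij by (simp add: enumerates_order_def)
    also have "\<dots> \<longleftrightarrow> x = y \<or> arrQ (F0 x) (F0 y)"
      using xs(2) ij by (auto simp: enumerates_order_def F0_nth nth_eq_iff_index_eq)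
    finally show ?thesis .
  qed
  then interpret reachability_quiver "grid_V n" "grid_arr n" "set xs" "{..<length xs}" arrQ F0
    using finite_grid_paths xs(1) bij_betw_inv_into[OF nth_bij] arrQ
    by unfold_locales (auto simp: F0_def)
  show ?thesis using lin_cat_iso_Phi by blast
qed

section \<open>Intervals and their sources and sinks\<close>

lemma grid_interval_subset: "I \<in> grid_intervals n \<Longrightarrow> I \<subseteq> grid_V n"
  by (simp add: grid_intervals_def)

lemma grid_interval_convex:
  assumes I: "I \<in> grid_intervals n" and "x \<in> I" "y \<in> I" "z \<in> grid_V n" "x \<le> z" "z \<le> y"
  shows "z \<in> I"
proof -
  have "x \<in> grid_V n" using assms grid_interval_subset by blast
  then have "(grid_arr n)\<^sup>*\<^sup>* x z" "(grid_arr n)\<^sup>*\<^sup>* z y"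
    using assms grid_interval_subset grid_reach_iff by blast+
  with assms show ?thesis unfolding grid_intervals_def by blast
qed

lemma grid_interval_row:
  assumes I: "I \<in> grid_intervals n" and ne: "Row \<noteq> {}" and Row: "Row = {j. (r, j) \<in> I}"
  shows "\<exists>a b. 1 \<le> a \<and> a \<le> b \<and> b \<le> n \<and> Row = {a..b}"
proof -
  have sub: "Row \<subseteq> {1..n}" "r \<in> {1, 2}"
    using ne grid_interval_subset[OF I] by (auto simp: Row grid_V_def)
  have fin: "finite Row" using sub(1) by (rule finite_subset) simp
  have ends: "Min Row \<in> Row" "Max Row \<in> Row" using Min_in[OF fin ne] Max_in[OF fin ne] .
  have "{Min Row..Max Row} \<subseteq> Row"
  proof
    fix t assume t: "t \<in> {Min Row..Max Row}"
    have "(r, t) \<in> grid_V n" using t ends sub by (auto simp: grid_V_def)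
    then show "t \<in> Row"
      using grid_interval_convex[OF I, of "(r, Min Row)" "(r, Max Row)" "(r, t)"] ends t Row by auto
  qed
  then have "Row = {Min Row..Max Row}" using fin by auto
  then show ?thesis using sub ends by (intro exI[of _ "Min Row"] exI[of _ "Max Row"]) auto
qed

lemma grid_interval_common_column:
  assumes I: "I \<in> grid_intervals n" and "(1, j) \<in> I" "(2, j') \<in> I"
  shows "\<exists>t. (1, t) \<in> I \<and> (2, t) \<in> I"
proof -
  let ?E = "\<lambda>a b. a \<in> I \<and> b \<in> I \<and> (grid_arr n a b \<or> grid_arr n b a)"
  have "?E\<^sup>*\<^sup>* (1, j) v \<Longrightarrow> fst v = 1 \<or> (\<exists>t. (1, t) \<in> I \<and> (2, t) \<in> I)" for v
  proof (induction rule: rtranclp_induct)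
    case (step u v)
    then show ?case by (cases u, cases v) (auto simp: grid_arr_def)
  qed simp
  moreover have "?E\<^sup>*\<^sup>* (1, j) (2, j')" using assms unfolding grid_intervals_def by blast
  ultimately show ?thesis by fastforce
qed

lemma grid_interval_shape:
  assumes I: "I \<in> grid_intervals n"
  obtains (one_row) r a b where "r \<in> {1, 2}" "1 \<le> a" "a \<le> b" "b \<le> n" "I = {r} \<times> {a..b}"
  | (two_rows) a1 b1 a2 b2 where "1 \<le> a2" "a2 \<le> a1" "a1 \<le> b2" "b2 \<le> b1" "b1 \<le> n"
      "I = {1} \<times> {a1..b1} \<union> {2} \<times> {a2..b2}"
proof -
  define R1 R2 where "R1 = {j. (1, j) \<in> I}" and "R2 = {j. (2, j) \<in> I}"
  have "fst x = 1 \<or> fst x = 2" if "x \<in> I" for x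
    using that grid_interval_subset[OF I] by (auto simp: grid_V_def)
  then have I_rows: "I = {1} \<times> R1 \<union> {2} \<times> R2"
    by (auto simp: R1_def R2_def) (metis prod.collapse)+
  consider "R1 = {}" | "R2 = {}" | "R1 \<noteq> {}" "R2 \<noteq> {}" by blast
  then show ?thesis
  proof cases
    case 1
    then have "R2 \<noteq> {}" using I I_rows by (auto simp: grid_intervals_def)
    then obtain a b where "1 \<le> a" "a \<le> b" "b \<le> n" "R2 = {a..b}"
      using grid_interval_row[OF I _ R2_def] by blast
    then show ?thesis using one_row[of 2] I_rows 1 by simp
  next
    case 2
    then have "R1 \<noteq> {}" using I I_rows by (auto simp: grid_intervals_def)
    then obtain a b where "1 \<le> a" "a \<le> b" "b \<le> n" "R1 = {a..b}"
      using grid_interval_row[OF I _ R1_def] by blast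
    then show ?thesis using one_row[of 1] I_rows 2 by simp
  next
    case 3
    obtain a1 b1 a2 b2 where R: "1 \<le> a1" "a1 \<le> b1" "b1 \<le> n" "R1 = {a1..b1}"
        "1 \<le> a2" "a2 \<le> b2" "b2 \<le> n" "R2 = {a2..b2}"
      using grid_interval_row[OF I 3(1) R1_def] grid_interval_row[OF I 3(2) R2_def] by metis
    obtain t where "(1, t) \<in> I" "(2, t) \<in> I"
      using 3 grid_interval_common_column[OF I] by (auto simp: R1_def R2_def)
    then have "t \<in> R1" "t \<in> R2" by (simp_all add: R1_def R2_def)
    then have "a1 \<le> b2" using R by auto
    have corners: "(1, a1) \<in> I" "(2, b2) \<in> I" using R by (auto simp: R1_def R2_def)
    have "(1, b2) \<in> I" "(2, a1) \<in> I"
      using grid_interval_convex[OF I corners] R \<open>a1 \<le> b2\<close> by (auto simp: grid_V_def)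
    then have "b2 \<le> b1" "a2 \<le> a1" using R by (auto simp: R1_def R2_def)
    then show ?thesis using two_rows R I_rows \<open>a1 \<le> b2\<close> by simp
  qed
qed

lemma not_in_ss_vertices:
  assumes "u \<in> I" "grid_arr n u x" "w \<in> I" "grid_arr n x w"
  shows "x \<notin> ss_vertices n I"
  using assms by (auto simp: ss_vertices_def)

lemma ss_vertices_row:
  assumes "r \<in> {1, 2}" "1 \<le> a" "a \<le> b" "b \<le> n"
  shows "ss_vertices n ({r} \<times> {a..b}) = {(r, a), (r, b)}"
proof -
  let ?I = "{r} \<times> {a..b}"
  have interior: "(r, j) \<notin> ss_vertices n ?I" if "a < j" "j < b" for j
    using that assms
    by (intro not_in_ss_vertices[of "(r, j - 1)" _ _ _ "(r, Suc j)"]) (auto simp: grid_arr_def grid_V_def)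
  have "ss_vertices n ?I \<subseteq> {(r, a), (r, b)}"
  proof
    fix x assume x: "x \<in> ss_vertices n ?I"
    then obtain j where "x = (r, j)" "a \<le> j" "j \<le> b" by (auto simp: ss_vertices_def)
    with x interior show "x \<in> {(r, a), (r, b)}" by (cases "j = a \<or> j = b") auto
  qed
  moreover have "{(r, a), (r, b)} \<subseteq> ss_vertices n ?I"
    using assms by (auto simp: ss_vertices_def grid_arr_def)
  ultimately show ?thesis by blast
qed

lemma ss_vertices_two_rows:
  assumes "1 \<le> a2" "a2 \<le> a1" "a1 \<le> b2" "b2 \<le> b1" "b1 \<le> n"
  shows "ss_vertices n ({1} \<times> {a1..b1} \<union> {2} \<times> {a2..b2}) =
    {(1, a1), (2, b2)} \<union> (if a2 < a1 then {(2, a2)} else {}) \<union> (if b2 < b1 then {(1, b1)} else {})"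
    (is "ss_vertices n ?I = ?S")
proof -
  have row1: "(1, j) \<notin> ss_vertices n ?I" if "a1 < j" "j \<le> b1" "j < b1 \<or> j \<le> b2" for j
  proof (cases "j < b1")
    case True
    then show ?thesis using that assms
      by (intro not_in_ss_vertices[of "(1, j - 1)" _ _ _ "(1, Suc j)"]) (auto simp: grid_arr_def grid_V_def)
  next
    case False
    then show ?thesis using that assms
      by (intro not_in_ss_vertices[of "(1, j - 1)" _ _ _ "(2, j)"]) (auto simp: grid_arr_def grid_V_def)
  qed
  have row2: "(2, j) \<notin> ss_vertices n ?I" if "a2 \<le> j" "j < b2" "a2 < j \<or> a1 \<le> j" for j
  proof (cases "a2 < j")
    case True
    then show ?thesis using that assms
      by (intro not_in_ss_vertices[of "(2, j - 1)" _ _ _ "(2, Suc j)"]) (auto simp: grid_arr_def grid_V_def)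
  next
    case False
    then show ?thesis using that assms
      by (intro not_in_ss_vertices[of "(1, j)" _ _ _ "(2, Suc j)"]) (auto simp: grid_arr_def grid_V_def)
  qed
  have "ss_vertices n ?I \<subseteq> ?S"
  proof
    fix x assume x: "x \<in> ss_vertices n ?I"
    then consider j where "x = (1, j)" "a1 \<le> j" "j \<le> b1" | j where "x = (2, j)" "a2 \<le> j" "j \<le> b2"
      by (auto simp: ss_vertices_def)
    then show "x \<in> ?S"
    proof cases
      case (1 j)
      with x row1[of j] show ?thesis by (cases "j = a1"; cases "j < b1 \<or> j \<le> b2") auto
    next
      case (2 j)
      with x row2[of j] show ?thesis by (cases "j = b2"; cases "a2 < j \<or> a1 \<le> j") auto
    qed
  qed
  moreover have "?S \<subseteq> ss_vertices n ?I"
    using assms by (auto simp: ss_vertices_def grid_arr_def)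
  ultimately show ?thesis by blast
qed

lemma five_quivers_without_composable_arrows:
  assumes "(k, arrQ) \<in> five_quivers"
  shows "\<not> arrQ a a" and "arrQ a b \<Longrightarrow> \<not> arrQ b c" and "arrQ a b \<Longrightarrow> a < k \<and> b < k"
  using assms by (auto simp: five_quivers_def)

lemma row_ends_enumeration:
  fixes r a b :: nat
  assumes "a \<le> b"
  obtains k arrQ xs where "(k, arrQ) \<in> five_quivers" "set xs = {(r, a), (r, b)}" "length xs = k"
    "enumerates_order xs arrQ"
proof (cases "a = b")
  case True
  show ?thesis by (rule that[of 1 "\<lambda>_ _. False" "[(r, a)]"])
    (use True in \<open>auto simp: five_quivers_def enumerates_order_def\<close>)
next
  case False
  show ?thesis by (rule that[of 2 "\<lambda>i j. i = 0 \<and> j = 1" "[(r, a), (r, b)]"])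
    (use False assms in \<open>auto simp: five_quivers_def enumerates_order_def All_less_Suc2\<close>)
qed

lemma two_row_ends_enumeration:
  fixes a1 b1 a2 b2 :: nat
  assumes "a2 \<le> a1" "a1 \<le> b2" "b2 \<le> b1"
  obtains k arrQ and xs :: "(nat \<times> nat) list" where "(k, arrQ) \<in> five_quivers"
    "set xs = {(1, a1), (2, b2)} \<union> (if a2 < a1 then {(2, a2)} else {}) \<union> (if b2 < b1 then {(1, b1)} else {})"
    "length xs = k" "enumerates_order xs arrQ"
proof -
  consider "a2 < a1" "b2 < b1" | "a2 < a1" "b2 = b1" | "a2 = a1" "b2 < b1" | "a2 = a1" "b2 = b1"
    using assms by linarith
  then show ?thesis
  proof cases
    case 1
    show ?thesis by (rule that[of 4 "\<lambda>i j. (i = 0 \<and> j = 1) \<or> (i = 2 \<and> j = 1) \<or> (i = 2 \<and> j = 3)"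
        "[(2, a2), (2, b2), (1, a1), (1, b1)]"])
      (use 1 assms in \<open>auto simp: five_quivers_def enumerates_order_def All_less_Suc2\<close>)
  next
    case 2
    show ?thesis by (rule that[of 3 "\<lambda>i j. (i = 0 \<and> j = 1) \<or> (i = 2 \<and> j = 1)"
        "[(1, a1), (2, b2), (2, a2)]"])
      (use 2 assms in \<open>auto simp: five_quivers_def enumerates_order_def All_less_Suc2\<close>)
  next
    case 3
    show ?thesis by (rule that[of 3 "\<lambda>i j. (i = 1 \<and> j = 0) \<or> (i = 1 \<and> j = 2)"
        "[(2, b2), (1, a1), (1, b1)]"])
      (use 3 assms in \<open>auto simp: five_quivers_def enumerates_order_def All_less_Suc2\<close>)
  next
    case 4
    show ?thesis by (rule that[of 2 "\<lambda>i j. i = 0 \<and> j = 1" "[(1, a1), (2, b2)]"])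
      (use 4 assms in \<open>auto simp: five_quivers_def enumerates_order_def All_less_Suc2\<close>)
  qed
qed

lemma ss_vertices_enumeration:
  assumes "I \<in> grid_intervals n"
  obtains k arrQ xs where "(k, arrQ) \<in> five_quivers" "set xs = ss_vertices n I" "length xs = k"
    "enumerates_order xs arrQ"
  using assms
proof (cases rule: grid_interval_shape)
  case (one_row r a b)
  then show ?thesis
    using row_ends_enumeration[OF one_row(3), of r] that ss_vertices_row[OF one_row(1-4)] by metis
next
  case (two_rows a1 b1 a2 b2)
  then show ?thesis
    using two_row_ends_enumeration[OF two_rows(2-4)] that ss_vertices_two_rows[OF two_rows(1-5)] by metis
qed

theorem mainTheorem19:
  fixes n :: nat and I :: "(nat \<times> nat) set"
  assumes "I \<in> grid_intervals n"
  shows "\<exists>(k, arrQ) \<in> five_quivers. \<exists>F0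
           (Phi :: nat \<times> nat \<Rightarrow> nat \<times> nat \<Rightarrow> ((nat \<times> nat) list \<Rightarrow> 'k::field) \<Rightarrow> (nat list \<Rightarrow> 'k)).
           lin_cat_iso (grid_V n) (grid_arr n) (ss_vertices n I) {..<k} arrQ F0 Phi"
proof -
  obtain k arrQ xs where Q: "(k, arrQ) \<in> five_quivers"
    and xs: "set xs = ss_vertices n I" "length xs = k" "enumerates_order xs arrQ"
    using ss_vertices_enumeration[OF assms] .
  have "set xs \<subseteq> grid_V n"
    using xs(1) grid_interval_subset[OF assms] by (auto simp: ss_vertices_def)
  then have "\<exists>F0 (Phi :: _ \<Rightarrow> _ \<Rightarrow> (_ \<Rightarrow> 'k::field) \<Rightarrow> _).
      lin_cat_iso (grid_V n) (grid_arr n) (set xs) {..<length xs} arrQ F0 Phi"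
    using xs(2,3) five_quivers_without_composable_arrows[OF Q]
    by (intro lin_cat_iso_grid_of_enumeration) auto
  then show ?thesis using Q xs(1,2) by auto
qed

end
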